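(* Let $G$ be a group and $R,L,S\subseteq G$ with $R=R^{-1}$, $L=L^{-1}$, $|R|=|L|$, and such that no element of $R\cup L$ is equal to its own inverse. If the bi-Cayley graph $\mathrm{Bi}(G,R,L,S)$ is connected, then it admits a partite presentation with exactly two vertex classes, i.e. $\mathrm{Bi}(G,R,L,S)\cong\mathrm{PCay}(P)$ for a partite presentation $P$ with $|X|=2$.
   Context: $\mathrm{Bi}(G,R,L,S)$ has vertex set $\{(g)_0,(g)_1: g\in G\}$ and edges $\{(g)_0,(gr)_0\}$ ($g\in G,r\in R$), $\{(g)_1,(gl)_1\}$ ($g\in G,l\in L$), and $\{(g)_0,(gs)_1\}$ ($g\in G, s\in S$). A partite presentation $P=\langle X\mid U\mid I\mid \phi\mid \mathcal R\rangle$ consists of: a nonempty set $X$; disjoint sets $U$, $I$ with $S':=U\cup I$; the group $MF_P:=\langle S'\mid s^2\ (s\in I)\rangle$; a map $\phi:S'\to\mathrm{Sym}(X)$ such that $\phi(s)$ is a fixed-point-free involution for each $s\in I$ and the $\phi(s)$ generate a subgroup acting transitively on $X$; and for each $x\in X$ a set $\mathcal R_x\subseteq MF_P$ of words $s_1\cdots s_n$ ($s_i\in S'\cup S'^{-1}$, $\phi(s^{-1}):=\phi(s)^{-1}$) with $\phi(s_n)\circ\cdots\circ\phi(s_1)(x)=x$. The presentation graph $C(P)$ has vertex set $X$; for each $s\in U$ and $x\in X$ one edge from $x$ to $\phi(s)(x)$, its orientation from $x$ to $\phi(s)(x)$ labelled $s$ and reverse labelled $s^{-1}$; for each $s\in I$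 and each pair $\{x,\phi(s)(x)\}$ one edge with both orientations labelled $s$. The presentation complex $\mathcal C(P)$ is $C(P)$ with, for every $x\in X$ and $r=s_1\cdots s_n\in\mathcal R_x$, a 2-cell attached along the closed walk from $x$ successively traversing the outgoing edges labelled $s_1,\dots,s_n$. $\mathrm{PCay}(P)$ is the 1-skeleton of the universal cover of $\mathcal C(P)$. *)

theory Defs
  imports "HOL-Algebra.Group" "HOL-Library.Equipollence"
begin

text \<open>A multigraph is given by a vertex set V, an edge set E and an incidence
map en assigning to each edge its set of (one or two) end vertices.\<close>

definition mg_iso ::
  "'v set \<Rightarrow> 'e set \<Rightarrow> ('e \<Rightarrow> 'v set) \<Rightarrow> 'w set \<Rightarrow> 'f set \<Rightarrow> ('f \<Rightarrow> 'w set) \<Rightarrow> bool" where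
  "mg_iso V E en V' E' en' \<longleftrightarrow>
     (\<exists>fv fe. bij_betw fv V V' \<and> bij_betw fe E E' \<and> (\<forall>e\<in>E. en' (fe e) = fv ` en e))"

definition mg_connected :: "'v set \<Rightarrow> 'e set \<Rightarrow> ('e \<Rightarrow> 'v set) \<Rightarrow> bool" where
  "mg_connected V E en \<longleftrightarrow>
     (\<forall>u\<in>V. \<forall>v\<in>V. (\<lambda>a b. \<exists>e\<in>E. en e = {a, b})\<^sup>*\<^sup>* u v)"

text \<open>Vertex (g)_0 is (g, False), vertex (g)_1 is (g, True); edges are the
sets of their end vertices.\<close>

definition bi_V :: "('g, 'b) monoid_scheme \<Rightarrow> ('g \<times> bool) set" where
  "bi_V G = carrier G \<times> (UNIV :: bool set)"

definition bi_E :: "('g, 'b) monoid_scheme \<Rightarrow> 'g set \<Rightarrow> 'g set \<Rightarrow> 'g set \<Rightarrow> ('g \<times> bool) set set" where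
  "bi_E G R L S =
     {{(g, False), (g \<otimes>\<^bsub>G\<^esub> r, False)} | g r. g \<in> carrier G \<and> r \<in> R} \<union>
     {{(g, True), (g \<otimes>\<^bsub>G\<^esub> l, True)} | g l. g \<in> carrier G \<and> l \<in> L} \<union>
     {{(g, False), (g \<otimes>\<^bsub>G\<^esub> s, True)} | g s. g \<in> carrier G \<and> s \<in> S}"

text \<open>Letters: (s, True) stands for s, (s, False) for s^{-1}; for s in I only
(s, True) is a letter (s^{-1} = s in MF_P).  Words over letters represent
elements of MF_P = <U \<union> I | s^2 (s \<in> I)>.\<close>

type_synonym 's letter = "'s \<times> bool"

definition letters :: "'s set \<Rightarrow> 's set \<Rightarrow> 's letter set" where
  "letters U I = ((\<lambda>s. (s, True)) ` (U \<union> I)) \<union> ((\<lambda>s. (s, False)) ` U)"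

definition inv_letter :: "'s set \<Rightarrow> 's letter \<Rightarrow> 's letter" where
  "inv_letter I a = (if fst a \<in> I then a else (fst a, \<not> snd a))"

definition act_letter :: "'x set \<Rightarrow> ('s \<Rightarrow> 'x \<Rightarrow> 'x) \<Rightarrow> 's letter \<Rightarrow> 'x \<Rightarrow> 'x" where
  "act_letter X \<phi> a y = (if snd a then \<phi> (fst a) y else inv_into X (\<phi> (fst a)) y)"

text \<open>End vertex of the walk in C(P) starting at x and following the word w
(first letter first): phi(s_n) o ... o phi(s_1) (x).\<close>
definition walk_end :: "'x set \<Rightarrow> ('s \<Rightarrow> 'x \<Rightarrow> 'x) \<Rightarrow> 'x \<Rightarrow> 's letter list \<Rightarrow> 'x" where
  "walk_end X \<phi> x w = fold (act_letter X \<phi>) w x"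

definition partite_presentation ::
  "'x set \<Rightarrow> 's set \<Rightarrow> 's set \<Rightarrow> ('s \<Rightarrow> 'x \<Rightarrow> 'x) \<Rightarrow> ('x \<Rightarrow> 's letter list set) \<Rightarrow> bool" where
  "partite_presentation X U I \<phi> Rel \<longleftrightarrow>
     X \<noteq> {} \<and> U \<inter> I = {} \<and>
     (\<forall>s\<in>U \<union> I. bij_betw (\<phi> s) X X) \<and>
     (\<forall>s\<in>I. \<forall>x\<in>X. \<phi> s (\<phi> s x) = x \<and> \<phi> s x \<noteq> x) \<and>
     (\<forall>x\<in>X. \<forall>y\<in>X. \<exists>w\<in>lists (letters U I). walk_end X \<phi> x w = y) \<and>
     (\<forall>x\<in>X. \<forall>r\<in>Rel x. r \<in> lists (letters U I) \<and> walk_end X \<phi> x r = x)"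

text \<open>Vertices of the universal cover = homotopy classes (rel endpoints) of
walks in the presentation complex starting at a base point x0.  Walks from x0
correspond to words over the letters; homotopy is generated by removing
backtracks and removing the boundary of a 2-cell at its base vertex.\<close>

definition pres_step ::
  "'x set \<Rightarrow> 's set \<Rightarrow> 's set \<Rightarrow> ('s \<Rightarrow> 'x \<Rightarrow> 'x) \<Rightarrow> ('x \<Rightarrow> 's letter list set) \<Rightarrow> 'x
    \<Rightarrow> 's letter list \<Rightarrow> 's letter list \<Rightarrow> bool" where
  "pres_step X U I \<phi> Rel x0 w w' \<longleftrightarrow>
     w \<in> lists (letters U I) \<and> w' \<in> lists (letters U I) \<and>
     ((\<exists>u v a. a \<in> letters U I \<and> w = u @ [a, inv_letter I a] @ v \<and> w' = u @ v) \<or>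
      (\<exists>u v r. r \<in> Rel (walk_end X \<phi> x0 u) \<and> w = u @ r @ v \<and> w' = u @ v))"

definition pres_base :: "'x set \<Rightarrow> 'x" where
  "pres_base X = (SOME x. x \<in> X)"

definition pres_homot ::
  "'x set \<Rightarrow> 's set \<Rightarrow> 's set \<Rightarrow> ('s \<Rightarrow> 'x \<Rightarrow> 'x) \<Rightarrow> ('x \<Rightarrow> 's letter list set)
    \<Rightarrow> ('s letter list \<times> 's letter list) set" where
  "pres_homot X U I \<phi> Rel =
     {(w, w'). w \<in> lists (letters U I) \<and> w' \<in> lists (letters U I) \<and>
               equivclp (pres_step X U I \<phi> Rel (pres_base X)) w w'}"

definition PCay_V ::
  "'x set \<Rightarrow> 's set \<Rightarrow> 's set \<Rightarrow> ('s \<Rightarrow> 'x \<Rightarrow> 'x) \<Rightarrow> ('x \<Rightarrow> 's letter list set)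
    \<Rightarrow> 's letter list set set" where
  "PCay_V X U I \<phi> Rel = lists (letters U I) // pres_homot X U I \<phi> Rel"

text \<open>The dart (C, a) leaves vertex C along the lift of the edge labelled a.\<close>
definition PCay_head ::
  "'x set \<Rightarrow> 's set \<Rightarrow> 's set \<Rightarrow> ('s \<Rightarrow> 'x \<Rightarrow> 'x) \<Rightarrow> ('x \<Rightarrow> 's letter list set)
    \<Rightarrow> 's letter list set \<Rightarrow> 's letter \<Rightarrow> 's letter list set" where
  "PCay_head X U I \<phi> Rel C a = pres_homot X U I \<phi> Rel `` {(SOME w. w \<in> C) @ [a]}"

text \<open>An edge of PCay(P) is a pair {dart, reverse dart}; its ends are the tails
of its darts.\<close>
definition PCay_E ::
  "'x set \<Rightarrow> 's set \<Rightarrow> 's set \<Rightarrow> ('s \<Rightarrow> 'x \<Rightarrow> 'x) \<Rightarrow> ('x \<Rightarrow> 's letter list set)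
    \<Rightarrow> ('s letter list set \<times> 's letter) set set" where
  "PCay_E X U I \<phi> Rel =
     {{(C, a), (PCay_head X U I \<phi> Rel C a, inv_letter I a)} | C a.
        C \<in> PCay_V X U I \<phi> Rel \<and> a \<in> letters U I}"

definition PCay_ends :: "('v \<times> 'l) set \<Rightarrow> 'v set" where
  "PCay_ends E = fst ` E"

end

theory Submission
  imports Defs
begin

text \<open>Choose halves \<open>A \<subseteq> R\<close>, \<open>B \<subseteq> L\<close> containing one element of each inverse pair; since
  \<open>|R| = |L|\<close> there is a bijection \<open>f : A \<rightarrow> B\<close>.  Take \<open>X = {0, 1}\<close>, one generator in \<open>U\<close> for
  each \<open>r \<in> A\<close> acting trivially on \<open>X\<close>, and one involution in \<open>I\<close> for each \<open>s \<in> S\<close> swapping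
  \<open>0\<close> and \<open>1\<close>.  A word then lifts to a walk in \<open>Bi(G,R,L,S)\<close>: at a vertex \<open>(g)\<^sub>0\<close> the letter
  \<open>r\<close> moves to \<open>(gr)\<^sub>0\<close>, at \<open>(g)\<^sub>1\<close> it moves to \<open>(g f(r))\<^sub>1\<close>, and \<open>s\<close> crosses between the two
  sheets.  Declaring as relators at \<open>x\<close> all words whose lift from \<open>(1)\<^sub>x\<close> is closed, two words
  from the base point are homotopic iff their lifts end at the same vertex (by left
  invariance of the lift), so the homotopy classes are the vertices of the (connected)
  bi-Cayley graph and the lifted edges are its edges.\<close>

lemma mg_iso_sym:
  assumes "mg_iso V E en V' E' en'" and "\<forall>e\<in>E. en e \<subseteq> V"
  shows "mg_iso V' E' en' V E en"
proof -
  obtain fv fe where f: "bij_betw fv V V'" "bij_betw fe E E'" "\<forall>e\<in>E. en' (fe e) = fv ` en e"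
    using assms(1) unfolding mg_iso_def by blast
  have "en (inv_into E fe e') = inv_into V fv ` en' e'" if e': "e' \<in> E'" for e'
  proof -
    define e where "e = inv_into E fe e'"
    have e: "e \<in> E" "fe e = e'" using e' f(2) unfolding e_def
      by (auto simp: bij_betw_def inv_into_into f_inv_into_f)
    have "inv_into V fv ` en' e' = inv_into V fv ` fv ` en e" using f(3) e by auto
    also have "\<dots> = en e" using assms(2) e(1) f(1)
      by (auto simp: bij_betw_def inv_into_f_f subsetD image_iff)
    finally show ?thesis unfolding e_def by simp
  qed
  then show ?thesis unfolding mg_iso_def
    using bij_betw_inv_into[OF f(1)] bij_betw_inv_into[OF f(2)] by blast
qed

lemma mg_connected_bi_imp_S_nonempty:
  assumes "\<one>\<^bsub>G\<^esub> \<in> carrier G" and "mg_connected (bi_V G) (bi_E G R L S) id"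
  shows "S \<noteq> {}"
proof
  assume "S = {}"
  then have same_sheet: "snd a = snd b" if "\<exists>e\<in>bi_E G R L S. id e = {a, b}" for a b
    using that unfolding bi_E_def by (auto simp: doubleton_eq_iff)
  have "\<not> snd v" if "(\<lambda>a b. \<exists>e\<in>bi_E G R L S. id e = {a, b})\<^sup>*\<^sup>* (\<one>\<^bsub>G\<^esub>, False) v" for v
    using that by (induction rule: rtranclp_induct) (simp, metis same_sheet)
  moreover have "(\<lambda>a b. \<exists>e\<in>bi_E G R L S. id e = {a, b})\<^sup>*\<^sup>* (\<one>\<^bsub>G\<^esub>, False) (\<one>\<^bsub>G\<^esub>, True)"
    using assms unfolding mg_connected_def bi_V_def by simp
  ultimately show False by fastforce
qed

lemma (in group) inv_closed_split:
  assumes RG: "R \<subseteq> carrier G" and Ri: "(\<lambda>x. inv x) ` R = R" and nf: "\<forall>x\<in>R. inv x \<noteq> x"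
  obtains A where "R = A \<union> (\<lambda>x. inv x) ` A" and "A \<inter> (\<lambda>x. inv x) ` A = {}"
proof -
  define c where "c r = (SOME x. x \<in> {r, inv r})" for r
  have c_mem: "c r \<in> {r, inv r}" for r unfolding c_def by (rule someI[of _ r]) simp
  have c_inv: "c (inv r) = c r" if "r \<in> carrier G" for r
  proof -
    have "{inv r, inv (inv r)} = {r, inv r}" using that by auto
    then show ?thesis unfolding c_def by simp
  qed
  define A where "A = {r \<in> R. c r = r}"
  have iR: "inv r \<in> R" if "r \<in> R" for r using Ri that by blast
  have "R \<subseteq> A \<union> (\<lambda>x. inv x) ` A"
  proof
    fix r assume r: "r \<in> R"
    show "r \<in> A \<union> (\<lambda>x. inv x) ` A"
    proof (cases "c r = r")
      case True then show ?thesis using r A_def by simp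
    next
      case False
      then have "c r = inv r" using c_mem[of r] by blast
      then have "c (inv r) = inv r" using c_inv[of r] r RG by auto
      then have "inv r \<in> A" using iR r A_def by simp
      moreover have "r = inv (inv r)" using r RG by auto
      ultimately show ?thesis by blast
    qed
  qed
  moreover have "A \<union> (\<lambda>x. inv x) ` A \<subseteq> R" using A_def iR by auto
  moreover have "A \<inter> (\<lambda>x. inv x) ` A = {}"
  proof (rule ccontr)
    assume "A \<inter> (\<lambda>x. inv x) ` A \<noteq> {}"
    then obtain a where a: "a \<in> A" "inv a \<in> A" by blast
    then have "inv a = c (inv a)" "c (inv a) = c a" "c a = a" "a \<in> R"
      using A_def c_inv RG by auto
    then show False using nf by auto
  qed
  ultimately show ?thesis using that by blast
qed

lemma (in group) card_inv_split:
  assumes "A \<subseteq> carrier G" and "A \<inter> (\<lambda>x. inv x) ` A = {}" and "finite A"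
  shows "card (A \<union> (\<lambda>x. inv x) ` A) = 2 * card A"
proof -
  have "inj_on (\<lambda>x. inv x) A" using inv_inj assms(1) by (rule inj_on_subset)
  then show ?thesis using card_Un_disjoint[OF assms(3) finite_imageI[OF assms(3)] assms(2)]
    by (simp add: card_image)
qed

lemma infinite_Un_image_eqpoll:
  assumes "infinite A"
  shows "A \<union> h ` A \<approx> A"
proof (rule lepoll_antisym)
  have "ordLeq2 (card_of (A \<union> h ` A)) (card_of A)"
    by (rule card_of_Un_ordLeq_infinite_Field)
       (use assms in \<open>simp_all add: Field_card_of card_of_refl[THEN ordIso_imp_ordLeq]
          card_of_image card_of_card_order_on\<close>)
  then show "A \<union> h ` A \<lesssim> A" by (simp add: lepoll_def card_of_ordLeq[symmetric])
  show "A \<lesssim> A \<union> h ` A" by (simp add: subset_imp_lepoll)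
qed

lemma (in group) inv_split_halves_eqpoll:
  assumes "A \<subseteq> carrier G" and "A \<inter> (\<lambda>x. inv x) ` A = {}"
    and "B \<subseteq> carrier G" and "B \<inter> (\<lambda>x. inv x) ` B = {}"
    and RL: "A \<union> (\<lambda>x. inv x) ` A \<approx> B \<union> (\<lambda>x. inv x) ` B"
  shows "A \<approx> B"
proof (cases "finite A")
  case True
  then have "finite B" using eqpoll_finite_iff[OF RL] by simp
  then have "2 * card A = 2 * card B"
    using RL True assms card_inv_split eqpoll_iff_card by (metis finite_Un finite_imageI)
  then show ?thesis using True \<open>finite B\<close> by (simp add: eqpoll_iff_card)
next
  case False
  then have "infinite B" using eqpoll_finite_iff[OF RL] by simp
  then show ?thesis using False RL infinite_Un_image_eqpoll
    by (meson eqpoll_sym eqpoll_trans)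
qed

subsection \<open>Lifting words to walks in the bi-Cayley graph\<close>

locale bi_cayley_halves = group G for G (structure) +
  fixes R L S A B :: "'g set" and f :: "'g \<Rightarrow> 'g"
  assumes R_closed: "R \<subseteq> carrier G" and L_closed: "L \<subseteq> carrier G" and S_closed: "S \<subseteq> carrier G"
    and R_split: "R = A \<union> (\<lambda>x. inv x) ` A" and A_disjoint: "A \<inter> (\<lambda>x. inv x) ` A = {}"
    and L_split: "L = B \<union> (\<lambda>x. inv x) ` B" and B_disjoint: "B \<inter> (\<lambda>x. inv x) ` B = {}"
    and f_bij: "bij_betw f A B"
begin

text \<open>The tags \<open>0\<close> and \<open>2\<close> keep \<open>U\<close> and \<open>I\<close> disjoint even if \<open>A\<close> and \<open>S\<close> overlap.\<close>

definition "X = {0, 1::nat}"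
definition "U = (\<lambda>r. (r, 0::nat)) ` A"
definition "I = (\<lambda>s. (s, 2::nat)) ` S"
definition "\<phi> = (\<lambda>(s::'g \<times> nat) (x::nat). if snd s = 2 then 1 - x else x)"

definition lift_step :: "'g \<times> bool \<Rightarrow> ('g \<times> nat) letter \<Rightarrow> 'g \<times> bool" where
  "lift_step v c = (if snd (fst c) = 2 then
       (if snd v then (fst v \<otimes> inv (fst (fst c)), False) else (fst v \<otimes> fst (fst c), True))
     else if snd v then (fst v \<otimes> (if snd c then f (fst (fst c)) else inv (f (fst (fst c)))), True)
     else (fst v \<otimes> (if snd c then fst (fst c) else inv (fst (fst c))), False))"

definition "walk_lift v w = fold (\<lambda>c v. lift_step v c) w v"

definition "Rel x = {w \<in> lists (letters U I). walk_end X \<phi> x w = x \<and> walk_lift (\<one>, x = 1) w = (\<one>, x = 1)}"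

definition "inv_word w = map (inv_letter I) (rev w)"

lemma A_closed: "A \<subseteq> carrier G" using R_closed R_split by auto
lemma f_mem_B: "r \<in> A \<Longrightarrow> f r \<in> B" using f_bij bij_betwE by blast
lemma f_closed: "r \<in> A \<Longrightarrow> f r \<in> carrier G" using f_mem_B L_closed L_split by auto

lemma mem_letters_iff: "c \<in> letters U I \<longleftrightarrow>
   (\<exists>r\<in>A. c = ((r,0),True) \<or> c = ((r,0),False)) \<or> (\<exists>s\<in>S. c = ((s,2),True))"
  unfolding letters_def U_def I_def by auto

lemma inv_letter_U: "inv_letter I ((r,0),d) = ((r,0), \<not> d)"
  unfolding inv_letter_def I_def by auto

lemma inv_letter_I: "s \<in> S \<Longrightarrow> inv_letter I ((s,2),d) = ((s,2), d)"
  unfolding inv_letter_def I_def by auto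

lemma inv_letter_closed: "c \<in> letters U I \<Longrightarrow> inv_letter I c \<in> letters U I"
  unfolding mem_letters_iff by (auto simp: inv_letter_U inv_letter_I)

lemma inv_letter_inv_letter: "c \<in> letters U I \<Longrightarrow> inv_letter I (inv_letter I c) = c"
  unfolding mem_letters_iff by (auto simp: inv_letter_U inv_letter_I)

lemma inv_word_closed: "w \<in> lists (letters U I) \<Longrightarrow> inv_word w \<in> lists (letters U I)"
  unfolding inv_word_def using inv_letter_closed by auto

lemma mem_bi_V_iff: "v \<in> bi_V G \<longleftrightarrow> fst v \<in> carrier G"
  unfolding bi_V_def by (simp add: mem_Times_iff)

lemma lift_step_closed: "v \<in> bi_V G \<Longrightarrow> c \<in> letters U I \<Longrightarrow> lift_step v c \<in> bi_V G"
  unfolding mem_letters_iff mem_bi_V_iff lift_step_def using A_closed S_closed f_closed by auto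

lemma lift_step_inv_letter:
  "v \<in> bi_V G \<Longrightarrow> c \<in> letters U I \<Longrightarrow> lift_step (lift_step v c) (inv_letter I c) = v"
  unfolding mem_letters_iff mem_bi_V_iff using A_closed S_closed f_closed
  by (cases v) (auto simp: lift_step_def inv_letter_U inv_letter_I m_assoc)

lemma lift_step_left_mult: "h \<in> carrier G \<Longrightarrow> g \<in> carrier G \<Longrightarrow> c \<in> letters U I \<Longrightarrow>
   lift_step (h \<otimes> g, b) c = (h \<otimes> fst (lift_step (g,b) c), snd (lift_step (g,b) c))"
  unfolding mem_letters_iff using A_closed S_closed f_closed by (auto simp: lift_step_def m_assoc)

lemma lift_step_inj:
  assumes "v \<in> bi_V G" "a \<in> letters U I" "b \<in> letters U I" "lift_step v a = lift_step v b"
  shows "a = b"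
proof -
  obtain g sheet where v: "v = (g, sheet)" by force
  have g: "g \<in> carrier G" using assms(1) v by (simp add: mem_bi_V_iff)
  have cancel: "x = y" if "x \<in> carrier G" "y \<in> carrier G" "g \<otimes> x = g \<otimes> y" for x y
    using that g by simp
  have inv_cancel: "x = y" if "x \<in> carrier G" "y \<in> carrier G" "inv x = inv y" for x y
    using that by (metis inv_inv)
  have A_inv: "r \<noteq> inv r'" if "r \<in> A" "r' \<in> A" for r r' using A_disjoint that by blast
  have B_inv: "f r \<noteq> inv (f r')" if "r \<in> A" "r' \<in> A" for r r'
    using B_disjoint f_mem_B that by blast
  have f_inj: "r = r'" if "r \<in> A" "r' \<in> A" "f r = f r'" for r r'
    using f_bij that by (meson bij_betw_def inj_onD)
  have A_carrier: "r \<in> carrier G" if "r \<in> A" for r using that A_closed by auto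
  have S_carrier: "s \<in> carrier G" if "s \<in> S" for s using that S_closed by auto
  from assms(2-4) show ?thesis unfolding mem_letters_iff v
    apply (cases sheet)
     apply (auto simp: lift_step_def)
    by (metis cancel inv_cancel A_inv B_inv f_inj A_carrier S_carrier f_closed inv_closed)+
qed

lemma walk_lift_Nil [simp]: "walk_lift v [] = v"
  by (simp add: walk_lift_def)

lemma walk_lift_Cons [simp]: "walk_lift v (c # w) = walk_lift (lift_step v c) w"
  by (simp add: walk_lift_def)

lemma walk_lift_append [simp]: "walk_lift v (u @ w) = walk_lift (walk_lift v u) w"
  by (simp add: walk_lift_def)

lemma walk_lift_closed: "v \<in> bi_V G \<Longrightarrow> w \<in> lists (letters U I) \<Longrightarrow> walk_lift v w \<in> bi_V G"
  by (induction w arbitrary: v) (auto simp: lift_step_closed)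

lemma walk_lift_inv_word:
  "v \<in> bi_V G \<Longrightarrow> w \<in> lists (letters U I) \<Longrightarrow> walk_lift (walk_lift v w) (inv_word w) = v"
proof (induction w arbitrary: v)
  case Nil then show ?case by (simp add: inv_word_def)
next
  case (Cons c w)
  have "walk_lift (walk_lift v (c # w)) (inv_word (c # w))
      = lift_step (walk_lift (walk_lift (lift_step v c) w) (inv_word w)) (inv_letter I c)"
    by (simp add: inv_word_def walk_lift_def)
  also have "\<dots> = lift_step (lift_step v c) (inv_letter I c)" using Cons lift_step_closed by auto
  also have "\<dots> = v" using Cons lift_step_inv_letter by auto
  finally show ?case .
qed

lemma walk_lift_left_mult: "h \<in> carrier G \<Longrightarrow> g \<in> carrier G \<Longrightarrow> w \<in> lists (letters U I) \<Longrightarrow>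
   walk_lift (h \<otimes> g, b) w = (h \<otimes> fst (walk_lift (g,b) w), snd (walk_lift (g,b) w))"
proof (induction w arbitrary: g b)
  case Nil then show ?case by simp
next
  case (Cons c w)
  obtain g' b' where e: "lift_step (g,b) c = (g', b')" by force
  have "g' \<in> carrier G" using lift_step_closed[of "(g,b)" c] Cons e by (auto simp: mem_bi_V_iff)
  then show ?case using Cons e by (simp add: lift_step_left_mult)
qed

lemma act_letter_tracks_sheet: "x \<in> X \<Longrightarrow> c \<in> letters U I \<Longrightarrow>
   act_letter X \<phi> c x \<in> X \<and> (act_letter X \<phi> c x = 1 \<longleftrightarrow> snd (lift_step (g, x = 1) c))"
proof -
  assume x: "x \<in> X" and c: "c \<in> letters U I"
  have id_inv: "inv_into X (\<lambda>x. x) x = x" using x inv_into_f_f[of "\<lambda>x. x" X x] by simp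
  from c consider r where "c = ((r,0),True)" | r where "c = ((r,0),False)"
    | s where "c = ((s,2),True)"
    unfolding mem_letters_iff by blast
  then show ?thesis
  proof cases
    case 1 then show ?thesis using x by (simp add: act_letter_def \<phi>_def lift_step_def)
  next
    case 2 then show ?thesis using x id_inv by (simp add: act_letter_def \<phi>_def lift_step_def)
  next
    case 3 then show ?thesis using x by (auto simp: act_letter_def \<phi>_def lift_step_def X_def)
  qed
qed

lemma walk_end_tracks_sheet: "x \<in> X \<Longrightarrow> w \<in> lists (letters U I) \<Longrightarrow>
   walk_end X \<phi> x w \<in> X \<and> (walk_end X \<phi> x w = 1 \<longleftrightarrow> snd (walk_lift (g, x = 1) w))"
proof (induction w arbitrary: x g)
  case Nil then show ?case by (simp add: walk_end_def)
next
  case (Cons c w)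
  obtain g' b' where e: "lift_step (g, x = 1) c = (g', b')" by force
  have a: "act_letter X \<phi> c x \<in> X" "(act_letter X \<phi> c x = 1) = b'"
    using act_letter_tracks_sheet[of x c g] Cons e by auto
  have "walk_end X \<phi> x (c # w) = walk_end X \<phi> (act_letter X \<phi> c x) w"
    by (simp add: walk_end_def)
  moreover have "walk_lift (g, x = 1) (c # w) = walk_lift (g', act_letter X \<phi> c x = 1) w"
    using e a by simp
  ultimately show ?case using Cons.IH[of "act_letter X \<phi> c x" g'] Cons.prems a by simp
qed

lemma partite_presentation_two_sheets: "S \<noteq> {} \<Longrightarrow> partite_presentation X U I \<phi> Rel"
proof -
  assume "S \<noteq> {}"
  then obtain s where s: "s \<in> S" by blast
  have "bij_betw (\<lambda>x::nat. x) X X" "bij_betw (\<lambda>x::nat. 1 - x) X X"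
    unfolding bij_betw_def inj_on_def X_def by auto
  then have "\<forall>t\<in>U \<union> I. bij_betw (\<phi> t) X X"
    unfolding U_def I_def \<phi>_def by auto
  moreover have "\<forall>t\<in>I. \<forall>x\<in>X. \<phi> t (\<phi> t x) = x \<and> \<phi> t x \<noteq> x"
    unfolding I_def \<phi>_def X_def by auto
  moreover have "\<exists>w\<in>lists (letters U I). walk_end X \<phi> x w = y" if "x \<in> X" "y \<in> X" for x y
  proof (cases "x = y")
    case True then show ?thesis by (intro bexI[of _ "[]"]) (auto simp: walk_end_def)
  next
    case False
    then have "walk_end X \<phi> x [((s,2),True)] = y" using that
      by (auto simp: walk_end_def act_letter_def \<phi>_def X_def)
    then show ?thesis using s mem_letters_iff by (intro bexI[of _ "[((s,2),True)]"]) auto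
  qed
  ultimately show ?thesis unfolding partite_presentation_def
    by (auto simp: X_def U_def I_def Rel_def)
qed

subsection \<open>Homotopy classes of words are the endpoints of their lifts\<close>

abbreviation "base_vertex \<equiv> (\<one>, pres_base X = 1)"
abbreviation "homotopy_step \<equiv> pres_step X U I \<phi> Rel (pres_base X)"

lemma pres_base_in_X: "pres_base X \<in> X"
  unfolding pres_base_def by (rule someI[of _ 0]) (simp add: X_def)

lemma base_vertex_in_bi_V: "base_vertex \<in> bi_V G"
  by (simp add: mem_bi_V_iff)

text \<open>A relator read at \<open>walk_end X \<phi> (pres_base X) u\<close> is closed when lifted from
  \<open>walk_lift base_vertex u\<close>, because it is closed from \<open>(1)\<^sub>x\<close> and lifting commutes with left multiplication.\<close>

lemma homotopy_step_walk_lift: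
  assumes "homotopy_step w w'"
  shows "walk_lift base_vertex w = walk_lift base_vertex w'"
proof -
  have wl: "w \<in> lists (letters U I)" using assms unfolding pres_step_def by auto
  from assms consider
      (backtrack) u v a where "a \<in> letters U I" "w = u @ [a, inv_letter I a] @ v" "w' = u @ v"
    | (relator) u v r where "r \<in> Rel (walk_end X \<phi> (pres_base X) u)" "w = u @ r @ v" "w' = u @ v"
    unfolding pres_step_def by blast
  then show ?thesis
  proof cases
    case backtrack
    then have "walk_lift base_vertex u \<in> bi_V G"
      using wl walk_lift_closed[OF base_vertex_in_bi_V] by auto
    then show ?thesis using backtrack lift_step_inv_letter by simp
  next
    case relator
    then have u: "u \<in> lists (letters U I)" and r: "r \<in> lists (letters U I)" using wl by auto
    define y where "y = walk_end X \<phi> (pres_base X) u"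
    obtain g b where gb: "walk_lift base_vertex u = (g, b)" by force
    have g: "g \<in> carrier G" using walk_lift_closed[OF base_vertex_in_bi_V u] gb
      by (simp add: mem_bi_V_iff)
    have b: "b = (y = 1)" using walk_end_tracks_sheet[OF pres_base_in_X u, of \<one>] gb y_def by simp
    have "walk_lift (\<one>, y = 1) r = (\<one>, y = 1)" using relator y_def unfolding Rel_def by auto
    then have "walk_lift (g \<otimes> \<one>, b) r = (g, b)"
      using walk_lift_left_mult[OF g one_closed r, of b] b g by simp
    then show ?thesis using relator gb g by simp
  qed
qed

lemma equivclp_homotopy_step_backtrack:
  assumes "u \<in> lists (letters U I)" "v \<in> lists (letters U I)" "a \<in> letters U I"
  shows "equivclp homotopy_step (u @ v) (u @ [a, inv_letter I a] @ v)"
proof -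
  have "u @ [a, inv_letter I a] @ v \<in> lists (letters U I)" "u @ v \<in> lists (letters U I)"
    using assms inv_letter_closed by auto
  moreover have "\<exists>u' v' a'. a' \<in> letters U I \<and> u @ [a, inv_letter I a] @ v = u' @ [a', inv_letter I a'] @ v'
      \<and> u @ v = u' @ v'"
    using assms(3) by blast
  ultimately have "homotopy_step (u @ [a, inv_letter I a] @ v) (u @ v)"
    unfolding pres_step_def by blast
  then show ?thesis by blast
qed

lemma equivclp_homotopy_step_inv_word:
  "u \<in> lists (letters U I) \<Longrightarrow> v \<in> lists (letters U I) \<Longrightarrow> w \<in> lists (letters U I) \<Longrightarrow>
   equivclp homotopy_step (u @ v) (u @ inv_word w @ w @ v)"
proof (induction w arbitrary: v)
  case Nil then show ?case by (simp add: inv_word_def)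
next
  case (Cons a w)
  have a: "a \<in> letters U I" and w: "w \<in> lists (letters U I)" using Cons by auto
  have "equivclp homotopy_step (u @ v) (u @ inv_word w @ w @ v)" using Cons w by auto
  also have "equivclp homotopy_step (u @ inv_word w @ w @ v)
      ((u @ inv_word w) @ [inv_letter I a, inv_letter I (inv_letter I a)] @ (w @ v))"
    using equivclp_homotopy_step_backtrack[of "u @ inv_word w" "w @ v" "inv_letter I a"]
      Cons.prems inv_word_closed[OF w] inv_letter_closed[OF a]
    by (simp add: inv_letter_inv_letter[OF a])
  finally show ?case by (simp add: inv_word_def inv_letter_inv_letter[OF a])
qed

text \<open>Conversely, if \<open>w\<close> and \<open>w'\<close> lift to the same endpoint then \<open>w\<close> is homotopic to
  \<open>w \<cdot> w'\<inverse> \<cdot> w'\<close>, and \<open>w \<cdot> w'\<inverse>\<close> is a relator at the base point.\<close>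

lemma equivclp_homotopy_step_if_walk_lift_eq:
  assumes w: "w \<in> lists (letters U I)" and w': "w' \<in> lists (letters U I)"
    and eq: "walk_lift base_vertex w = walk_lift base_vertex w'"
  shows "equivclp homotopy_step w w'"
proof -
  define r where "r = w @ inv_word w'"
  have r: "r \<in> lists (letters U I)" using w inv_word_closed[OF w'] r_def by simp
  have lift_r: "walk_lift base_vertex r = base_vertex"
    using r_def eq walk_lift_inv_word[OF base_vertex_in_bi_V w'] by simp
  have "walk_end X \<phi> (pres_base X) r = pres_base X"
    using walk_end_tracks_sheet[OF pres_base_in_X r, of \<one>] lift_r pres_base_in_X
    unfolding X_def by auto
  then have "r \<in> Rel (walk_end X \<phi> (pres_base X) [])"
    using r lift_r by (simp add: Rel_def walk_end_def)
  then have "\<exists>u v r'. r' \<in> Rel (walk_end X \<phi> (pres_base X) u) \<and> r @ w' = u @ r' @ v \<and> w' = u @ v"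
    by (intro exI[of _ "[]"] exI[of _ w'] exI[of _ r]) simp
  then have "homotopy_step (r @ w') w'" unfolding pres_step_def using r w' by auto
  then have "equivclp homotopy_step (w @ inv_word w' @ w') w'" using r_def by auto
  moreover have "equivclp homotopy_step w (w @ inv_word w' @ w')"
    using equivclp_homotopy_step_inv_word[OF w _ w', of "[]"] by simp
  ultimately show ?thesis by (rule equivclp_trans[rotated])
qed

lemma pres_homot_eq:
  "pres_homot X U I \<phi> Rel = {(w, w'). w \<in> lists (letters U I) \<and> w' \<in> lists (letters U I) \<and>
     walk_lift base_vertex w = walk_lift base_vertex w'}"
proof -
  have "walk_lift base_vertex w = walk_lift base_vertex w'" if "equivclp homotopy_step w w'" for w w'
    using that by (induction rule: equivclp_induct) (simp, metis homotopy_step_walk_lift)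
  then show ?thesis unfolding pres_homot_def
    using equivclp_homotopy_step_if_walk_lift_eq by blast
qed

subsection \<open>The isomorphism between PCay(P) and the bi-Cayley graph\<close>

abbreviation "homot \<equiv> pres_homot X U I \<phi> Rel"

definition "class_end C = walk_lift base_vertex (SOME w. w \<in> C)"

lemma homot_class_eq: "w \<in> lists (letters U I) \<Longrightarrow>
   homot `` {w} = {w'. w' \<in> lists (letters U I) \<and> walk_lift base_vertex w' = walk_lift base_vertex w}"
  unfolding pres_homot_eq by auto

lemma class_end_homot_class: "w \<in> lists (letters U I) \<Longrightarrow> class_end (homot `` {w}) = walk_lift base_vertex w"
proof -
  assume w: "w \<in> lists (letters U I)"
  then have "w \<in> homot `` {w}" using homot_class_eq by simp
  then have "(SOME w'. w' \<in> homot `` {w}) \<in> homot `` {w}" by (rule someI)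
  then show ?thesis using homot_class_eq[OF w] unfolding class_end_def by simp
qed

lemma mem_PCay_V_iff: "C \<in> PCay_V X U I \<phi> Rel \<longleftrightarrow> (\<exists>w\<in>lists (letters U I). C = homot `` {w})"
  unfolding PCay_V_def quotient_def by blast

lemma class_end_closed: "C \<in> PCay_V X U I \<phi> Rel \<Longrightarrow> class_end C \<in> bi_V G"
  using class_end_homot_class walk_lift_closed[OF base_vertex_in_bi_V]
  unfolding mem_PCay_V_iff by metis

lemma inj_on_class_end: "inj_on class_end (PCay_V X U I \<phi> Rel)"
proof (rule inj_onI)
  fix C D assume "C \<in> PCay_V X U I \<phi> Rel" "D \<in> PCay_V X U I \<phi> Rel" "class_end C = class_end D"
  then obtain w w' where "w \<in> lists (letters U I)" "C = homot `` {w}"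
      "w' \<in> lists (letters U I)" "D = homot `` {w'}"
    unfolding mem_PCay_V_iff by blast
  moreover have "walk_lift base_vertex w = walk_lift base_vertex w'"
    using calculation \<open>class_end C = class_end D\<close> class_end_homot_class by metis
  ultimately show "C = D" using homot_class_eq by simp
qed

lemma PCay_head_closed_class_end:
  assumes C: "C \<in> PCay_V X U I \<phi> Rel" and a: "a \<in> letters U I"
  shows "PCay_head X U I \<phi> Rel C a \<in> PCay_V X U I \<phi> Rel
    \<and> class_end (PCay_head X U I \<phi> Rel C a) = lift_step (class_end C) a"
proof -
  obtain w where w: "w \<in> lists (letters U I)" "C = homot `` {w}"
    using C unfolding mem_PCay_V_iff by blast
  define w0 where "w0 = (SOME w. w \<in> C)"
  have "w \<in> C" using w homot_class_eq by simp
  then have "w0 \<in> C" unfolding w0_def by (rule someI)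
  then have w0: "w0 \<in> lists (letters U I)" "walk_lift base_vertex w0 = walk_lift base_vertex w"
    using w homot_class_eq by auto
  have "PCay_head X U I \<phi> Rel C a = homot `` {w0 @ [a]}"
    unfolding PCay_head_def w0_def ..
  moreover have l: "w0 @ [a] \<in> lists (letters U I)" using w0 a by simp
  moreover have "class_end (homot `` {w0 @ [a]}) = lift_step (class_end C) a"
    using class_end_homot_class[OF l] class_end_homot_class[OF w(1)] w w0 by simp
  ultimately show ?thesis unfolding mem_PCay_V_iff by (intro conjI bexI[of _ "w0 @ [a]"]) simp_all
qed

lemma PCay_ends_subset: "E \<in> PCay_E X U I \<phi> Rel \<Longrightarrow> PCay_ends E \<subseteq> PCay_V X U I \<phi> Rel"
  unfolding PCay_E_def PCay_ends_def using PCay_head_closed_class_end by auto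

lemma bi_E_cases:
  assumes "e \<in> bi_E G R L S"
  obtains v c where "v \<in> bi_V G" "c \<in> letters U I" "e = {v, lift_step v c}"
proof -
  have f_onto: "\<exists>a\<in>A. b = f a" if "b \<in> B" for b
    using f_bij that by (metis bij_betw_def imageE)
  from assms consider (R) g r where "g \<in> carrier G" "r \<in> R" "e = {(g, False), (g \<otimes> r, False)}"
    | (L) g l where "g \<in> carrier G" "l \<in> L" "e = {(g, True), (g \<otimes> l, True)}"
    | (S) g s where "g \<in> carrier G" "s \<in> S" "e = {(g, False), (g \<otimes> s, True)}"
    unfolding bi_E_def by blast
  then show ?thesis
  proof cases
    case R
    then consider "r \<in> A" | a where "a \<in> A" "r = inv a" using R_split by blast
    then show ?thesis
    proof cases
      case 1 show ?thesis by (rule that[of "(g, False)" "((r,0),True)"]) (use R 1 in \<open>auto simp: mem_bi_V_iff mem_letters_iff lift_step_def\<close>)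
    next
      case 2 show ?thesis by (rule that[of "(g, False)" "((a,0),False)"]) (use R 2 in \<open>auto simp: mem_bi_V_iff mem_letters_iff lift_step_def\<close>)
    qed
  next
    case L
    then consider a where "a \<in> A" "l = f a" | a where "a \<in> A" "l = inv (f a)"
      using L_split f_onto by blast
    then show ?thesis
    proof cases
      case 1 show ?thesis by (rule that[of "(g, True)" "((a,0),True)"]) (use L 1 in \<open>auto simp: mem_bi_V_iff mem_letters_iff lift_step_def\<close>)
    next
      case 2 show ?thesis by (rule that[of "(g, True)" "((a,0),False)"]) (use L 2 in \<open>auto simp: mem_bi_V_iff mem_letters_iff lift_step_def\<close>)
    qed
  next
    case S
    show ?thesis by (rule that[of "(g, False)" "((s,2),True)"]) (use S in \<open>auto simp: mem_bi_V_iff mem_letters_iff lift_step_def\<close>)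
  qed
qed

lemma lift_step_edge_in_bi_E:
  assumes v: "v \<in> bi_V G" and a: "a \<in> letters U I"
  shows "{v, lift_step v a} \<in> bi_E G R L S"
proof -
  obtain g sheet where vg: "v = (g, sheet)" by force
  have g: "g \<in> carrier G" using v vg by (simp add: mem_bi_V_iff)
  have eR: "{(g,False),(g \<otimes> r,False)} \<in> bi_E G R L S" if "r \<in> R" for r
    unfolding bi_E_def using g that by blast
  have eL: "{(g,True),(g \<otimes> l,True)} \<in> bi_E G R L S" if "l \<in> L" for l
    unfolding bi_E_def using g that by blast
  have eS: "{(g',False),(g' \<otimes> s,True)} \<in> bi_E G R L S" if "g' \<in> carrier G" "s \<in> S" for g' s
    unfolding bi_E_def using that by blast
  from a consider (gen) r d where "r \<in> A" "a = ((r,0),d)" | (cross) s where "s \<in> S" "a = ((s,2),True)"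
    unfolding mem_letters_iff by blast
  then show ?thesis
  proof cases
    case gen
    then have "r \<in> R" "inv r \<in> R" "f r \<in> L" "inv (f r) \<in> L"
      using R_split L_split f_mem_B by auto
    then show ?thesis using gen eR eL by (cases sheet; cases d) (auto simp: vg lift_step_def)
  next
    case cross
    then have s: "s \<in> carrier G" using S_closed by auto
    show ?thesis
    proof (cases sheet)
      case True
      have "{(g \<otimes> inv s, False), ((g \<otimes> inv s) \<otimes> s, True)} \<in> bi_E G R L S"
        using eS g s cross by simp
      moreover have "(g \<otimes> inv s) \<otimes> s = g" using g s by (simp add: m_assoc)
      ultimately show ?thesis using cross True by (auto simp: vg lift_step_def insert_commute)
    next
      case False
      then show ?thesis using cross eS g by (auto simp: vg lift_step_def)
    qed
  qed
qed

lemma walk_lift_reaches: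
  "(\<lambda>a b. \<exists>e\<in>bi_E G R L S. id e = {a, b})\<^sup>*\<^sup>* base_vertex v \<Longrightarrow>
   \<exists>w\<in>lists (letters U I). walk_lift base_vertex w = v"
proof (induction rule: rtranclp_induct)
  case base
  then show ?case by (intro bexI[of _ "[]"]) auto
next
  case (step a b)
  then obtain w where w: "w \<in> lists (letters U I)" "walk_lift base_vertex w = a" by blast
  from step obtain e where "e \<in> bi_E G R L S" "e = {a, b}" by auto
  then obtain x c where xc: "x \<in> bi_V G" "c \<in> letters U I" "{a, b} = {x, lift_step x c}"
    using bi_E_cases by metis
  show ?case
  proof (cases "a = x")
    case True
    then have "b = lift_step a c" using xc by (auto simp: doubleton_eq_iff)
    then show ?thesis using w xc by (intro bexI[of _ "w @ [c]"]) auto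
  next
    case False
    then have "a = lift_step x c" "b = x" using xc by (auto simp: doubleton_eq_iff)
    then have "b = lift_step a (inv_letter I c)" using lift_step_inv_letter xc by simp
    then show ?thesis using w xc inv_letter_closed by (intro bexI[of _ "w @ [inv_letter I c]"]) auto
  qed
qed

definition "edge_image E = class_end ` PCay_ends E"

lemma edge_image_PCay_edge:
  "C \<in> PCay_V X U I \<phi> Rel \<Longrightarrow> a \<in> letters U I \<Longrightarrow>
   edge_image {(C, a), (PCay_head X U I \<phi> Rel C a, inv_letter I a)}
     = {class_end C, lift_step (class_end C) a}"
  using PCay_head_closed_class_end by (simp add: edge_image_def PCay_ends_def)

text \<open>An edge of PCay(P) is determined by its image up to reversal of its dart, since a vertex
  and a letter determine the next vertex and, by \<open>lift_step_inj\<close>, conversely.\<close>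

lemma inj_on_edge_image: "inj_on edge_image (PCay_E X U I \<phi> Rel)"
proof (rule inj_onI)
  let ?V = "PCay_V X U I \<phi> Rel" and ?hd = "PCay_head X U I \<phi> Rel"
  fix E1 E2 assume "E1 \<in> PCay_E X U I \<phi> Rel" "E2 \<in> PCay_E X U I \<phi> Rel"
    and images: "edge_image E1 = edge_image E2"
  then obtain C a D b where E1: "E1 = {(C, a), (?hd C a, inv_letter I a)}" "C \<in> ?V" "a \<in> letters U I"
    and E2: "E2 = {(D, b), (?hd D b, inv_letter I b)}" "D \<in> ?V" "b \<in> letters U I"
    unfolding PCay_E_def by blast
  have ends: "{class_end C, lift_step (class_end C) a} = {class_end D, lift_step (class_end D) b}"
    using images E1 E2 edge_image_PCay_edge by simp
  have CD: "class_end C \<in> bi_V G" "class_end D \<in> bi_V G" using E1 E2 class_end_closed by auto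
  have class_end_eq: "C1 = C2" if "C1 \<in> ?V" "C2 \<in> ?V" "class_end C1 = class_end C2" for C1 C2
    using inj_on_class_end that by (metis inj_onD)
  show "E1 = E2"
  proof (cases "class_end C = class_end D")
    case True
    then have "lift_step (class_end C) a = lift_step (class_end C) b"
      using ends by (auto simp: doubleton_eq_iff)
    then have "a = b" using lift_step_inj CD E1 E2 by blast
    moreover have "C = D" using E1(2) E2(2) True by (rule class_end_eq)
    ultimately show ?thesis using E1 E2 by simp
  next
    case False
    then have e1: "class_end C = lift_step (class_end D) b"
      and e2: "lift_step (class_end C) a = class_end D"
      using ends by (auto simp: doubleton_eq_iff)
    have "lift_step (class_end C) (inv_letter I b) = class_end D"
      using e1 lift_step_inv_letter CD E2 by simp
    then have ab: "a = inv_letter I b"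
      using lift_step_inj[OF CD(1) E1(3) inv_letter_closed[OF E2(3)]] e2 by simp
    have "?hd C a = D" "?hd D b = C"
      using PCay_head_closed_class_end[OF E1(2,3)] PCay_head_closed_class_end[OF E2(2,3)] e1 e2
        E1(2) E2(2) class_end_eq by auto
    then show ?thesis using E1 E2 ab inv_letter_inv_letter[OF E2(3)] by (simp add: insert_commute)
  qed
qed

context
  assumes connected: "mg_connected (bi_V G) (bi_E G R L S) id"
begin

lemma walk_lift_surj: "v \<in> bi_V G \<Longrightarrow> \<exists>w\<in>lists (letters U I). walk_lift base_vertex w = v"
  using connected base_vertex_in_bi_V walk_lift_reaches unfolding mg_connected_def by blast

lemma bij_betw_class_end: "bij_betw class_end (PCay_V X U I \<phi> Rel) (bi_V G)"
proof -
  have "bi_V G \<subseteq> class_end ` PCay_V X U I \<phi> Rel"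
  proof
    fix v assume "v \<in> bi_V G"
    then obtain w where "w \<in> lists (letters U I)" "walk_lift base_vertex w = v"
      using walk_lift_surj by blast
    then show "v \<in> class_end ` PCay_V X U I \<phi> Rel"
      using class_end_homot_class mem_PCay_V_iff by (metis image_eqI)
  qed
  then show ?thesis unfolding bij_betw_def using inj_on_class_end class_end_closed by auto
qed

lemma edge_image_PCay_E: "edge_image ` PCay_E X U I \<phi> Rel = bi_E G R L S"
proof
  show "edge_image ` PCay_E X U I \<phi> Rel \<subseteq> bi_E G R L S"
  proof
    fix e assume "e \<in> edge_image ` PCay_E X U I \<phi> Rel"
    then obtain C a where "C \<in> PCay_V X U I \<phi> Rel" "a \<in> letters U I"
      "e = edge_image {(C, a), (PCay_head X U I \<phi> Rel C a, inv_letter I a)}"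
      unfolding PCay_E_def by blast
    then show "e \<in> bi_E G R L S"
      using edge_image_PCay_edge lift_step_edge_in_bi_E class_end_closed by simp
  qed
  show "bi_E G R L S \<subseteq> edge_image ` PCay_E X U I \<phi> Rel"
  proof
    fix e assume "e \<in> bi_E G R L S"
    then obtain v c where v: "v \<in> bi_V G" "c \<in> letters U I" "e = {v, lift_step v c}"
      by (rule bi_E_cases)
    then obtain w where w: "w \<in> lists (letters U I)" "walk_lift base_vertex w = v"
      using walk_lift_surj by blast
    let ?C = "homot `` {w}"
    have C: "?C \<in> PCay_V X U I \<phi> Rel" "class_end ?C = v"
      using w mem_PCay_V_iff class_end_homot_class by auto
    then have "{(?C, c), (PCay_head X U I \<phi> Rel ?C c, inv_letter I c)} \<in> PCay_E X U I \<phi> Rel"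
      unfolding PCay_E_def using v by blast
    moreover have "edge_image {(?C, c), (PCay_head X U I \<phi> Rel ?C c, inv_letter I c)} = e"
      using edge_image_PCay_edge C v by simp
    ultimately show "e \<in> edge_image ` PCay_E X U I \<phi> Rel" by (metis image_eqI)
  qed
qed

lemma mg_iso_bi_PCay:
  "mg_iso (bi_V G) (bi_E G R L S) id (PCay_V X U I \<phi> Rel) (PCay_E X U I \<phi> Rel) PCay_ends"
proof (rule mg_iso_sym)
  have "bij_betw edge_image (PCay_E X U I \<phi> Rel) (bi_E G R L S)"
    unfolding bij_betw_def using inj_on_edge_image edge_image_PCay_E by blast
  then show "mg_iso (PCay_V X U I \<phi> Rel) (PCay_E X U I \<phi> Rel) PCay_ends (bi_V G) (bi_E G R L S) id"
    unfolding mg_iso_def using bij_betw_class_end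
    by (intro exI[of _ class_end] exI[of _ edge_image]) (simp add: edge_image_def)
  show "\<forall>E\<in>PCay_E X U I \<phi> Rel. PCay_ends E \<subseteq> PCay_V X U I \<phi> Rel"
    using PCay_ends_subset by blast
qed

end

end

theorem proposition4:
  fixes G (structure) and R L S :: "'g set"
  assumes "group G"
    and "R \<subseteq> carrier G" and "L \<subseteq> carrier G" and "S \<subseteq> carrier G"
    and "(\<lambda>x. inv x) ` R = R" and "(\<lambda>x. inv x) ` L = L"
    and "R \<approx> L"
    and "\<forall>x\<in>R \<union> L. inv x \<noteq> x"
    and "mg_connected (bi_V G) (bi_E G R L S) id"
  shows "\<exists>(X :: nat set) (U :: ('g \<times> nat) set) I \<phi> Rel.
           partite_presentation X U I \<phi> Rel \<and> card X = 2 \<and>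
           mg_iso (bi_V G) (bi_E G R L S) id
                  (PCay_V X U I \<phi> Rel) (PCay_E X U I \<phi> Rel) PCay_ends"
proof -
  interpret group G by fact
  obtain A where A: "R = A \<union> (\<lambda>x. inv x) ` A" "A \<inter> (\<lambda>x. inv x) ` A = {}"
    using inv_closed_split[OF assms(2,5)] assms(8) by blast
  obtain B where B: "L = B \<union> (\<lambda>x. inv x) ` B" "B \<inter> (\<lambda>x. inv x) ` B = {}"
    using inv_closed_split[OF assms(3,6)] assms(8) by blast
  have "A \<approx> B" using inv_split_halves_eqpoll assms(2,3,7) A B by auto
  then obtain f where "bij_betw f A B" unfolding eqpoll_def by blast
  then interpret bi_cayley_halves G R L S A B f
    by unfold_locales (use assms(2-4) A B in auto)
  show ?thesis
  proof (intro exI conjI)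
    show "partite_presentation X U I \<phi> Rel"
      using partite_presentation_two_sheets mg_connected_bi_imp_S_nonempty assms(9) by blast
    show "card X = 2" by (simp add: X_def)
    show "mg_iso (bi_V G) (bi_E G R L S) id (PCay_V X U I \<phi> Rel) (PCay_E X U I \<phi> Rel) PCay_ends"
      using mg_iso_bi_PCay assms(9) .
  qed
qed

end
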